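(* Let $U$ be a subgroup of $G^*$. Then: (i) the matching mechanism $C^U$ is $U$-symmetric; (ii) if $F$ is a resolute and $U$-symmetric matching mechanism, then $F(p)\subseteq C^U(p)$ for every $p\in\mathcal{P}$.
   Context: Fix $n\ge 2$, $W=\{1,\dots,n\}$, $M=\{n+1,\dots,2n\}$, $I=W\cup M$. Permutations compose right-to-left. A preference profile is a function $p$ on $I$ assigning to each $x\in W$ a linear order $p(x)$ on $M$ and to each $y\in M$ a linear order $p(y)$ on $W$; $\mathcal{P}$ is the set of preference profiles. A matching is a permutation $\mu$ of $I$ with $\mu(W)=M$, $\mu(M)=W$, $\mu(\mu(z))=z$ for all $z$; $\mathcal{M}$ is the set of matchings. $G^*=\{\varphi\in\mathrm{Sym}(I):\{\varphi(W),\varphi(M)\}=\{W,M\}\}$. For a linear order $R$ on $X\subseteq I$ and $\varphi\in\mathrm{Sym}(I)$, $\varphi R$ is the relation on $\varphi(X)$ with $(a,b)\in\varphi R$ iff $(\varphi^{-1}(a),\varphi^{-1}(b))\in R$. For $p\in\mathcal{P}$, $\varphi\in G^*$, $p^\varphi(z)=\varphi\,p(\varphi^{-1}(z))$. For a permutation $\mu$, $\mu^\varphi=\varphi\mu\varphi^{-1}$; $S^\varphi=\{\mu^\varphi:\mu\in S\}$. A matching mechanism is a correspondence $F$ from $\mathcal{P}$ to $\mathcal{M}$; resolute if $|F(p)|=1$ for all $p$; $U$-symmetric if $F(p^\varphi)=F(p)^\varphi$ for all $p$ and $\varphi\in U$. For $U\le G^*$ and $p\in\mathcal{P}$, $\mathrm{Stab}_U(p)=\{\varphi\in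 U:p^\varphi=p\}$, and $C^U$ is the matching mechanism $C^U(p)=\{\mu\in\mathcal{M}:\mu^\varphi=\mu\text{ for all }\varphi\in\mathrm{Stab}_U(p)\}$. *)

theory Defs
  imports "HOL-Combinatorics.Permutations"
begin

(* Agents: W = {1..n} (women), M = {n+1..2n} (men), I = W \<union> M. *)
definition Wset :: "nat \<Rightarrow> nat set" where "Wset n = {1..n}"
definition Mset :: "nat \<Rightarrow> nat set" where "Mset n = {n+1..2*n}"
definition Iset :: "nat \<Rightarrow> nat set" where "Iset n = Wset n \<union> Mset n"

(* preference profiles; p z = {} for z outside I (so profiles are determined by their values on I) *)
definition profiles :: "nat \<Rightarrow> (nat \<Rightarrow> (nat \<times> nat) set) set" where
  "profiles n = {p. (\<forall>x\<in>Wset n. linear_order_on (Mset n) (p x))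
                  \<and> (\<forall>y\<in>Mset n. linear_order_on (Wset n) (p y))
                  \<and> (\<forall>z. z \<notin> Iset n \<longrightarrow> p z = {})}"

definition matchings :: "nat \<Rightarrow> (nat \<Rightarrow> nat) set" where
  "matchings n = {\<mu>. \<mu> permutes Iset n \<and> \<mu> ` Wset n = Mset n \<and> \<mu> ` Mset n = Wset n
                    \<and> (\<forall>z. \<mu> (\<mu> z) = z)}"

definition Gstar :: "nat \<Rightarrow> (nat \<Rightarrow> nat) set" where
  "Gstar n = {\<phi>. \<phi> permutes Iset n \<and> {\<phi> ` Wset n, \<phi> ` Mset n} = {Wset n, Mset n}}"

definition perm_subgroup :: "('a \<Rightarrow> 'a) set \<Rightarrow> ('a \<Rightarrow> 'a) set \<Rightarrow> bool" where
  "perm_subgroup U G \<longleftrightarrow> U \<subseteq> G \<and> id \<in> U \<and> (\<forall>a\<in>U. \<forall>b\<in>U. a \<circ> b \<in> U)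
                          \<and> (\<forall>a\<in>U. inv a \<in> U)"

definition rel_act :: "(nat \<Rightarrow> nat) \<Rightarrow> (nat \<times> nat) set \<Rightarrow> (nat \<times> nat) set" where
  "rel_act \<phi> R = {(a, b). (inv \<phi> a, inv \<phi> b) \<in> R}"

definition prof_act :: "(nat \<Rightarrow> (nat \<times> nat) set) \<Rightarrow> (nat \<Rightarrow> nat) \<Rightarrow> (nat \<Rightarrow> (nat \<times> nat) set)" where
  "prof_act p \<phi> = (\<lambda>z. rel_act \<phi> (p (inv \<phi> z)))"

definition conj_perm :: "(nat \<Rightarrow> nat) \<Rightarrow> (nat \<Rightarrow> nat) \<Rightarrow> (nat \<Rightarrow> nat)" where
  "conj_perm \<mu> \<phi> = \<phi> \<circ> \<mu> \<circ> inv \<phi>"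

definition matching_mechanism :: "nat \<Rightarrow> ((nat \<Rightarrow> (nat \<times> nat) set) \<Rightarrow> (nat \<Rightarrow> nat) set) \<Rightarrow> bool" where
  "matching_mechanism n F \<longleftrightarrow> (\<forall>p\<in>profiles n. F p \<subseteq> matchings n)"

definition resolute :: "nat \<Rightarrow> ((nat \<Rightarrow> (nat \<times> nat) set) \<Rightarrow> (nat \<Rightarrow> nat) set) \<Rightarrow> bool" where
  "resolute n F \<longleftrightarrow> (\<forall>p\<in>profiles n. card (F p) = 1)"

definition symmetric_wrt :: "nat \<Rightarrow> (nat \<Rightarrow> nat) set \<Rightarrow> ((nat \<Rightarrow> (nat \<times> nat) set) \<Rightarrow> (nat \<Rightarrow> nat) set) \<Rightarrow> bool" where
  "symmetric_wrt n U F \<longleftrightarrow> (\<forall>p\<in>profiles n. \<forall>\<phi>\<in>U. F (prof_act p \<phi>) = (\<lambda>\<mu>. conj_perm \<mu> \<phi>) ` F p)"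

definition Stab :: "(nat \<Rightarrow> nat) set \<Rightarrow> (nat \<Rightarrow> (nat \<times> nat) set) \<Rightarrow> (nat \<Rightarrow> nat) set" where
  "Stab U p = {\<phi>\<in>U. prof_act p \<phi> = p}"

definition CU :: "nat \<Rightarrow> (nat \<Rightarrow> nat) set \<Rightarrow> (nat \<Rightarrow> (nat \<times> nat) set) \<Rightarrow> (nat \<Rightarrow> nat) set" where
  "CU n U p = {\<mu>\<in>matchings n. \<forall>\<phi>\<in>Stab U p. conj_perm \<mu> \<phi> = \<mu>}"

end

theory Submission
  imports Defs
begin

text \<open>Conjugation by \<open>\<phi>\<close> carries \<open>Stab\<^sub>U(p)\<close> onto \<open>Stab\<^sub>U(p\<^sup>\<phi>)\<close>, so it carries matchings
  commuting with \<open>Stab\<^sub>U(p)\<close> onto matchings commuting with \<open>Stab\<^sub>U(p\<^sup>\<phi>)\<close>; this gives (i).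
  For (ii), if \<open>F(p) = {\<mu>}\<close> and \<open>\<phi>\<close> fixes \<open>p\<close>, then symmetry gives
  \<open>{\<mu>} = F(p\<^sup>\<phi>) = {\<mu>\<^sup>\<phi>}\<close>. Neither part needs \<open>n \<ge> 2\<close>.\<close>

lemma Gstar_bij: "\<phi> \<in> Gstar n \<Longrightarrow> bij \<phi>"
  unfolding Gstar_def using permutes_bij by blast

lemma perm_subgroup_Gstar_bij: "perm_subgroup U (Gstar n) \<Longrightarrow> \<phi> \<in> U \<Longrightarrow> bij \<phi>"
  unfolding perm_subgroup_def using Gstar_bij by blast

lemma rel_act_comp: "bij a \<Longrightarrow> bij b \<Longrightarrow> rel_act b (rel_act a R) = rel_act (b \<circ> a) R"
  unfolding rel_act_def by (simp add: o_inv_distrib)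

lemma prof_act_comp:
  "bij a \<Longrightarrow> bij b \<Longrightarrow> prof_act (prof_act p a) b = prof_act p (b \<circ> a)"
  unfolding prof_act_def by (rule ext) (simp add: rel_act_comp o_inv_distrib)

lemma prof_act_id: "prof_act p id = p"
  unfolding prof_act_def rel_act_def by (simp add: inv_id)

lemma prof_act_inv: "bij \<phi> \<Longrightarrow> prof_act (prof_act p \<phi>) (inv \<phi>) = p"
  by (simp add: prof_act_comp bij_imp_bij_inv bij_is_inj prof_act_id)

lemma conj_perm_comp:
  "bij a \<Longrightarrow> bij b \<Longrightarrow> conj_perm (conj_perm \<mu> a) b = conj_perm \<mu> (b \<circ> a)"
  unfolding conj_perm_def by (simp add: o_inv_distrib comp_assoc)

lemma conj_perm_inv:
  assumes "bij \<phi>"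
  shows "conj_perm (conj_perm \<mu> (inv \<phi>)) \<phi> = \<mu>"
proof -
  have "\<phi> \<circ> inv \<phi> = id" using assms bij_is_surj surj_iff by blast
  have "conj_perm (conj_perm \<mu> (inv \<phi>)) \<phi> = conj_perm \<mu> (\<phi> \<circ> inv \<phi>)"
    using assms by (simp add: conj_perm_comp bij_imp_bij_inv)
  also have "\<dots> = \<mu>"
    using \<open>\<phi> \<circ> inv \<phi> = id\<close> by (simp add: conj_perm_def inv_id)
  finally show ?thesis .
qed

lemma conj_perm_matchings:
  assumes "\<phi> \<in> Gstar n" "\<mu> \<in> matchings n"
  shows "conj_perm \<mu> \<phi> \<in> matchings n"
proof -
  have "bij \<phi>" using assms(1) Gstar_bij by blast
  have \<phi>: "\<phi> permutes Iset n" "{\<phi> ` Wset n, \<phi> ` Mset n} = {Wset n, Mset n}"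
    using assms(1) unfolding Gstar_def by auto
  have \<mu>: "\<mu> permutes Iset n" "\<mu> ` Wset n = Mset n" "\<mu> ` Mset n = Wset n" "\<forall>z. \<mu> (\<mu> z) = z"
    using assms(2) unfolding matchings_def by auto
  have inv_image: "inv \<phi> ` (\<phi> ` A) = A" for A
    using \<open>bij \<phi>\<close> by (simp add: image_comp bij_is_inj)
  have image: "conj_perm \<mu> \<phi> ` A = \<phi> ` (\<mu> ` (inv \<phi> ` A))" for A
    unfolding conj_perm_def by (simp add: image_comp)
  have "conj_perm \<mu> \<phi> permutes Iset n"
    unfolding conj_perm_def using \<phi>(1) \<mu>(1) permutes_compose permutes_inv by blast
  moreover have "conj_perm \<mu> \<phi> ` Wset n = Mset n \<and> conj_perm \<mu> \<phi> ` Mset n = Wset n"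
    using \<phi>(2) \<mu>(2,3) image inv_image by (metis doubleton_eq_iff)
  moreover have "\<forall>z. conj_perm \<mu> \<phi> (conj_perm \<mu> \<phi> z) = z"
    using \<open>bij \<phi>\<close> \<mu>(4) by (simp add: conj_perm_def bij_is_inj bij_is_surj surj_f_inv_f)
  ultimately show ?thesis unfolding matchings_def by blast
qed

lemma Stab_prof_act_conj:
  assumes "perm_subgroup U G" "\<phi> \<in> U" "bij \<phi>" "\<psi> \<in> Stab U (prof_act p \<phi>)" "bij \<psi>"
  shows "inv \<phi> \<circ> \<psi> \<circ> \<phi> \<in> Stab U p"
proof -
  have "\<psi> \<in> U" and \<psi>_fixes: "prof_act (prof_act p \<phi>) \<psi> = prof_act p \<phi>"
    using assms(4) unfolding Stab_def by auto
  then have "inv \<phi> \<circ> \<psi> \<circ> \<phi> \<in> U"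
    using assms(1,2) unfolding perm_subgroup_def by blast
  moreover have "prof_act p (inv \<phi> \<circ> \<psi> \<circ> \<phi>) = p"
    using \<psi>_fixes assms(3,5)
    by (metis bij_comp bij_imp_bij_inv prof_act_comp prof_act_inv)
  ultimately show ?thesis unfolding Stab_def by blast
qed

lemma conj_perm_CU:
  assumes U: "perm_subgroup U (Gstar n)" and "\<phi> \<in> U" "\<mu> \<in> CU n U p"
  shows "conj_perm \<mu> \<phi> \<in> CU n U (prof_act p \<phi>)"
proof -
  have "bij \<phi>" using U \<open>\<phi> \<in> U\<close> perm_subgroup_Gstar_bij by blast
  have "\<phi> \<in> Gstar n" using U \<open>\<phi> \<in> U\<close> unfolding perm_subgroup_def by blast
  then have "conj_perm \<mu> \<phi> \<in> matchings n"
    using conj_perm_matchings \<open>\<mu> \<in> CU n U p\<close> unfolding CU_def by blast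
  moreover have "conj_perm (conj_perm \<mu> \<phi>) \<psi> = conj_perm \<mu> \<phi>"
    if \<psi>: "\<psi> \<in> Stab U (prof_act p \<phi>)" for \<psi>
  proof -
    define \<sigma> where "\<sigma> = inv \<phi> \<circ> \<psi> \<circ> \<phi>"
    have "bij \<psi>" using U \<psi> perm_subgroup_Gstar_bij unfolding Stab_def by blast
    have "\<sigma> \<in> Stab U p" unfolding \<sigma>_def
      using Stab_prof_act_conj U \<open>\<phi> \<in> U\<close> \<open>bij \<phi>\<close> \<psi> \<open>bij \<psi>\<close> by blast
    then have \<mu>_fixed: "conj_perm \<mu> \<sigma> = \<mu>"
      using \<open>\<mu> \<in> CU n U p\<close> unfolding CU_def by blast
    have "bij \<sigma>" unfolding \<sigma>_def using \<open>bij \<phi>\<close> \<open>bij \<psi>\<close> by (simp add: bij_comp bij_imp_bij_inv)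
    have "\<psi> \<circ> \<phi> = \<phi> \<circ> \<sigma>"
      unfolding \<sigma>_def using \<open>bij \<phi>\<close> by (simp add: fun_eq_iff bij_is_surj surj_f_inv_f)
    then have "conj_perm (conj_perm \<mu> \<phi>) \<psi> = conj_perm (conj_perm \<mu> \<sigma>) \<phi>"
      using \<open>bij \<phi>\<close> \<open>bij \<psi>\<close> \<open>bij \<sigma>\<close> by (simp add: conj_perm_comp)
    then show ?thesis using \<mu>_fixed by simp
  qed
  ultimately show ?thesis unfolding CU_def by blast
qed

lemma symmetric_wrt_CU:
  assumes U: "perm_subgroup U (Gstar n)"
  shows "symmetric_wrt n U (CU n U)"
  unfolding symmetric_wrt_def
proof (intro ballI equalityI subsetI)
  fix p \<phi> \<mu>
  assume "\<phi> \<in> U" and \<mu>: "\<mu> \<in> CU n U (prof_act p \<phi>)"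
  have "bij \<phi>" using U \<open>\<phi> \<in> U\<close> perm_subgroup_Gstar_bij by blast
  have "inv \<phi> \<in> U" using U \<open>\<phi> \<in> U\<close> unfolding perm_subgroup_def by blast
  then have "conj_perm \<mu> (inv \<phi>) \<in> CU n U p"
    using conj_perm_CU[OF U _ \<mu>] prof_act_inv[OF \<open>bij \<phi>\<close>] by metis
  moreover have "\<mu> = conj_perm (conj_perm \<mu> (inv \<phi>)) \<phi>"
    using conj_perm_inv[OF \<open>bij \<phi>\<close>] by simp
  ultimately show "\<mu> \<in> (\<lambda>\<mu>. conj_perm \<mu> \<phi>) ` CU n U p" by blast
qed (use conj_perm_CU[OF U] in blast)

lemma resolute_symmetric_subset_CU:
  assumes "matching_mechanism n F" "resolute n F" "symmetric_wrt n U F" "p \<in> profiles n"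
  shows "F p \<subseteq> CU n U p"
proof -
  obtain \<mu> where F_p: "F p = {\<mu>}"
    using assms(2,4) unfolding resolute_def by (metis card_1_singletonE)
  have "\<mu> \<in> matchings n"
    using assms(1,4) F_p unfolding matching_mechanism_def by blast
  moreover have "conj_perm \<mu> \<phi> = \<mu>" if "\<phi> \<in> Stab U p" for \<phi>
  proof -
    have "\<phi> \<in> U" "prof_act p \<phi> = p" using that unfolding Stab_def by auto
    then have "F p = (\<lambda>\<mu>. conj_perm \<mu> \<phi>) ` F p"
      using assms(3,4) unfolding symmetric_wrt_def by metis
    then show ?thesis using F_p by simp
  qed
  ultimately show ?thesis using F_p unfolding CU_def by auto
qed

theorem proposition3:
  fixes n :: nat and U :: "(nat \<Rightarrow> nat) set"
  assumes "n \<ge> 2" and "perm_subgroup U (Gstar n)"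
  shows "(matching_mechanism n (CU n U) \<and> symmetric_wrt n U (CU n U))
       \<and> (\<forall>F. matching_mechanism n F \<and> resolute n F \<and> symmetric_wrt n U F
              \<longrightarrow> (\<forall>p\<in>profiles n. F p \<subseteq> CU n U p))"
proof -
  have "matching_mechanism n (CU n U)"
    unfolding matching_mechanism_def CU_def by blast
  then show ?thesis
    using symmetric_wrt_CU[OF assms(2)] resolute_symmetric_subset_CU by blast
qed

end
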